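(* Let $n\ge 1$, let $M_n=\{1,\dots,n\}$, and let $\mathcal{F}\subset 2^{M_n}$ be a union-closed family (i.e. $A\cup B\in\mathcal{F}$ whenever $A,B\in\mathcal{F}$) with $\bigcup_{A\in\mathcal{F}}A=M_n$. Then for any $A\in\mathcal{F}$ with $|A|\ge 2$, there exists $y\in A$ such that $$|\{F\in\mathcal{F}: y\in F\}|\ge \frac{1}{2^{|A|-2}+1}|\mathcal{F}|.$$
   Context: $|X|$ denotes the cardinality of a set $X$; $2^{M_n}$ is the power set of $M_n$. *)

theory Defs
  imports Complex_Main
begin

definition union_closed :: "'a set set \<Rightarrow> bool" where
  "union_closed \<F> \<longleftrightarrow> (\<forall>A\<in>\<F>. \<forall>B\<in>\<F>. A \<union> B \<in> \<F>)"

end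

theory Submission
  imports Defs
begin

text \<open>Fix distinct \<open>y, z \<in> A\<close> and let \<open>\<F>\<^sub>x\<close> be the members containing \<open>x\<close> and \<open>N\<close> the number
  of members containing \<open>A\<close>. A member \<open>F\<close> avoiding \<open>y\<close> and \<open>z\<close> is determined by
  \<open>(F \<union> A, F \<inter> A)\<close>, where \<open>F \<union> A\<close> is a member containing \<open>A\<close> by union-closedness and
  \<open>F \<inter> A \<subseteq> A - {y, z}\<close>; so there are at most \<open>2^(|A| - 2) N\<close> of them. The other members lie
  in \<open>\<F>\<^sub>y \<union> \<F>\<^sub>z\<close>, whose intersection has at least \<open>N\<close> elements, hence
  \<open>|\<F>| \<le> (2^(|A| - 2) - 1) N + |\<F>\<^sub>y| + |\<F>\<^sub>z|\<close>, and \<open>N \<le> |\<F>\<^sub>y|, |\<F>\<^sub>z|\<close> finishes the proof with the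
  more frequent of \<open>y\<close>, \<open>z\<close>.\<close>

lemma union_closed_card_avoiding_two_le:
  fixes \<F> :: "'a set set"
  assumes "finite \<F>" "union_closed \<F>" "A \<in> \<F>" "finite A"
    and "y \<in> A" "z \<in> A" "y \<noteq> z"
  shows "card {F\<in>\<F>. y \<notin> F \<and> z \<notin> F} \<le> 2 ^ (card A - 2) * card {G\<in>\<F>. A \<subseteq> G}"
proof -
  let ?D = "{F\<in>\<F>. y \<notin> F \<and> z \<notin> F}"
  let ?N = "{G\<in>\<F>. A \<subseteq> G}"
  have "inj_on (\<lambda>F. (F \<union> A, F \<inter> A)) ?D"
  proof (rule inj_onI)
    fix F G
    assume "(F \<union> A, F \<inter> A) = (G \<union> A, G \<inter> A)"
    then have "F \<union> A = G \<union> A" "F \<inter> A = G \<inter> A"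
      by simp_all
    then show "F = G"
      by blast
  qed
  moreover have "(\<lambda>F. (F \<union> A, F \<inter> A)) ` ?D \<subseteq> ?N \<times> Pow (A - {y, z})"
    using assms(2,3) unfolding union_closed_def by auto
  ultimately have "card ?D \<le> card (?N \<times> Pow (A - {y, z}))"
    by (rule card_inj_on_le) (use assms(1,4) in auto)
  also have "\<dots> = card ?N * 2 ^ (card A - 2)"
    using assms(4-7) by (simp add: card_cartesian_product card_Pow card_Diff_subset numeral_2_eq_2)
  finally show ?thesis
    by (simp add: mult.commute)
qed

lemma union_closed_card_le_two_elements:
  fixes \<F> :: "'a set set"
  assumes "finite \<F>" "union_closed \<F>" "A \<in> \<F>" "finite A"
    and "y \<in> A" "z \<in> A" "y \<noteq> z"
  shows "card \<F> + card {G\<in>\<F>. A \<subseteq> G}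
    \<le> 2 ^ (card A - 2) * card {G\<in>\<F>. A \<subseteq> G} + card {F\<in>\<F>. y \<in> F} + card {F\<in>\<F>. z \<in> F}"
proof -
  let ?D = "{F\<in>\<F>. y \<notin> F \<and> z \<notin> F}"
  let ?Y = "{F\<in>\<F>. y \<in> F}"
  let ?Z = "{F\<in>\<F>. z \<in> F}"
  have "card \<F> = card (?D \<union> (?Y \<union> ?Z))"
    by (rule arg_cong[where f = card]) auto
  also have "\<dots> \<le> card ?D + card (?Y \<union> ?Z)"
    by (rule card_Un_le)
  finally have "card \<F> \<le> card ?D + card (?Y \<union> ?Z)" .
  moreover have "card (?Y \<union> ?Z) + card (?Y \<inter> ?Z) = card ?Y + card ?Z"
    using card_Un_Int[of ?Y ?Z] assms(1) by simp
  moreover have "card {G\<in>\<F>. A \<subseteq> G} \<le> card (?Y \<inter> ?Z)"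
    using assms(1,5,6) by (intro card_mono) auto
  ultimately show ?thesis
    using union_closed_card_avoiding_two_le[OF assms] by linarith
qed

lemma union_closed_ex_frequent_element:
  fixes \<F> :: "'a set set"
  assumes "finite \<F>" "union_closed \<F>" "A \<in> \<F>" "card A \<ge> 2"
  shows "\<exists>y\<in>A. card \<F> \<le> (2 ^ (card A - 2) + 1) * card {F\<in>\<F>. y \<in> F}"
proof -
  have "finite A"
    by (rule card_ge_0_finite) (use assms(4) in linarith)
  obtain B where "B \<subseteq> A" "card B = 2"
    using obtain_subset_with_card_n[OF assms(4)] by blast
  then obtain y z where yz: "y \<in> A" "z \<in> A" "y \<noteq> z"
    by (metis card_2_iff insert_subset)
  obtain w where w: "w \<in> A"
    and most_frequent: "card {F\<in>\<F>. y \<in> F} \<le> card {F\<in>\<F>. w \<in> F}"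
      "card {F\<in>\<F>. z \<in> F} \<le> card {F\<in>\<F>. w \<in> F}"
    using yz by (cases "card {F\<in>\<F>. y \<in> F} \<le> card {F\<in>\<F>. z \<in> F}") auto
  define j where "j = 2 ^ (card A - 2) - (1 :: nat)"
  have pow_eq: "2 ^ (card A - 2) = j + 1"
    by (simp add: j_def)
  let ?N = "card {G\<in>\<F>. A \<subseteq> G}"
  let ?m = "card {F\<in>\<F>. w \<in> F}"
  have "card \<F> + ?N \<le> (j + 1) * ?N + 2 * ?m"
    using union_closed_card_le_two_elements[OF assms(1-3) \<open>finite A\<close> yz, unfolded pow_eq]
      most_frequent by linarith
  moreover have "j * ?N \<le> j * ?m"
    using assms(1) w by (intro mult_le_mono2 card_mono) auto
  moreover have "(j + 1) * ?N = j * ?N + ?N" "(j + 2) * ?m = j * ?m + 2 * ?m"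
    by simp_all
  ultimately have "card \<F> \<le> (j + 2) * ?m"
    by linarith
  then have "card \<F> \<le> (2 ^ (card A - 2) + 1) * ?m"
    unfolding pow_eq by (simp add: add.assoc)
  with w show ?thesis
    by blast
qed

theorem proposition3p4:
  fixes n :: nat and \<F> :: "nat set set" and A :: "nat set"
  assumes "n \<ge> 1"
    and "\<F> \<subseteq> Pow {1..n}"
    and "union_closed \<F>"
    and "\<Union>\<F> = {1..n}"
    and "A \<in> \<F>"
    and "card A \<ge> 2"
  shows "\<exists>y\<in>A. real (card {F\<in>\<F>. y \<in> F}) \<ge> (1 / (2 ^ (card A - 2) + 1)) * real (card \<F>)"
proof -
  have "finite \<F>"
    using assms(2) by (rule finite_subset) simp
  then obtain y where "y \<in> A"
    and frequent: "card \<F> \<le> (2 ^ (card A - 2) + 1) * card {F\<in>\<F>. y \<in> F}"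
    using union_closed_ex_frequent_element assms(3,5,6) by blast
  have "real (card \<F>) \<le> real ((2 ^ (card A - 2) + 1) * card {F\<in>\<F>. y \<in> F})"
    using frequent by (rule of_nat_mono)
  then have "real (card \<F>) \<le> (2 ^ (card A - 2) + 1) * real (card {F\<in>\<F>. y \<in> F})"
    by (simp add: algebra_simps)
  with \<open>y \<in> A\<close> show ?thesis
    by (auto simp: mult.commute pos_divide_le_eq add_pos_pos)
qed

end
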